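(* Let $\Psi$ be a context and $\Phi$ a context all of whose variables have level $<k$. Then $\Psi\vdash\Phi^k\ \mathsf{ctx}$ if and only if $\lfloor\Psi\rfloor_k\vdash\Phi^k\ \mathsf{ctx}$.
   Context: Multi-level contextual LF. Every variable $x^n$ carries a level $n\in\mathbb{N}$. Syntax: sorts $s ::= \mathsf{type}\mid\mathsf{kind}$; atomic types $P ::= s \mid \mathsf{a} \mid P\,(\hat\Gamma.N)$; types $A,B,K ::= P \mid \Pi x^n{:}A[\Phi^n].B$; atomic terms $R ::= x^n[\sigma] \mid \mathsf{c} \mid R\,(\hat\Gamma.N)$; normal terms $M,N ::= R \mid \lambda x^n.M$; substitutions $\sigma ::= \cdot \mid \sigma,\hat\Gamma^n.M \mid \sigma, x^n$ (the last is a renaming entry); contexts $\Psi,\Phi,\Gamma ::= \cdot \mid \Psi, x^n{:}A[\Phi^n]$. Constants $\mathsf a,\mathsf c$ come from a fixed signature $\Sigma$; $\hat\Gamma$ is the list of variable names of $\Gamma$. $\Phi^n$ indicates that all variables of $\Phi$ have level $<n$. Merging: $\cdot\oplus\Phi=\Phi$; $\Psi\oplus\cdot=\Psi$; $(\Psi,x^n{:}A[\Gamma^n])\oplus(\Phi,y^k{:}B[\Gamma'^k]) = ((\Psi,x^n{:}A[\Gamma^n])\oplus\Phi), y^k{:}B[\Gamma'^k]$ if $k\le n$, and $=(\Psi\oplus(\Phi,y^k{:}B[\Gamma'^k])),x^n{:}A[\Gamma^n]$ otherwise. Chopping: $\lfloor\cdot\rfloor_n=\cdot$; $\lfloor\Psi,x^k{:}A[\Phi^k]\rfloor_n=\lfloor\Psi\rfloor_n$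 if $k<n$, and $=\Psi,x^k{:}A[\Phi^k]$ otherwise. Context well-formedness $\Psi\vdash\Phi^n\ \mathsf{ctx}$: $\Psi\vdash\cdot\ \mathsf{ctx}$; and $\Psi\vdash \Phi^n,x^k{:}A[\Gamma^k]\ \mathsf{ctx}$ (for $k<n$) if $\Psi\vdash\Phi^n\ \mathsf{ctx}$, $(\lfloor\Psi\rfloor_n\oplus\lfloor\Phi^n\rfloor_k)\oplus\Gamma^k\vdash A\Leftarrow\mathsf{type}$ and $\lfloor\Psi\rfloor_n\oplus\lfloor\Phi^n\rfloor_k\vdash\Gamma^k\ \mathsf{ctx}$. The remaining (bidirectional) judgments, defined mutually: $\Psi\vdash\mathsf{type}\Leftarrow\mathsf{kind}$; $\Psi\vdash P\Leftarrow\mathsf{type}$ if $\Psi\vdash P\Rightarrow\mathsf{type}$; $\Psi\vdash\Pi x^n{:}A[\Phi^n].B\Leftarrow s$ if $\lfloor\Psi\rfloor_n\oplus\Phi^n\vdash A\Leftarrow\mathsf{type}$, $\Psi\vdash\Phi^n\ \mathsf{ctx}$ and $\Psi\oplus x^n{:}A[\Phi^n]\vdash B\Leftarrow s$; $\Psi\vdash\mathsf a\Rightarrow\Sigma(\mathsf a)$, $\Psi\vdash\mathsf c\Rightarrow\Sigma(\mathsf c)$; $\Psi\vdash P\,(\hat\Phi^n.N)\Rightarrow[\hat\Phi^n.N/x^n]K$ if $\Psi\vdash P\Rightarrow\Pi x^n{:}A[\Phi^n].K$ and $\lfloor\Psi\rfloor_n\oplus\Phi^n\vdash N\Leftarrow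 A$ (same rule for $R\,(\hat\Phi^n.N)$); $\Psi\vdash x^n[\sigma]\Rightarrow[\sigma]_{\Phi^n}A$ if $\Psi(x^n)=A[\Phi^n]$ and $\Psi\vdash\sigma\Leftarrow\Phi^n$; $\Psi\vdash R\Leftarrow Q$ if $\Psi\vdash R\Rightarrow P$ and $P=Q$; $\Psi\vdash\lambda x^n.M\Leftarrow\Pi x^n{:}A[\Phi^n].B$ if $\Psi\oplus x^n{:}A[\Phi^n]\vdash M\Leftarrow B$; $\Psi\vdash\cdot\Leftarrow\cdot$; $\Psi\vdash\sigma,\hat\Gamma^k.M\Leftarrow\Phi^n,x^k{:}A[\Gamma^k]$ if $\Psi\vdash\sigma\Leftarrow\Phi^n$ and $\lfloor\Psi\rfloor_k\oplus[\sigma]_{\Phi^n}(\Gamma^k)\vdash M\Leftarrow[\lfloor\sigma\rfloor_k\oplus\mathrm{id}(\hat\Gamma^k)]A$; $\Psi\vdash\sigma,y^k\Leftarrow\Phi^n,x^k{:}A[\Gamma^k]$ if $\Psi\vdash\sigma\Leftarrow\Phi^n$ and $\Psi(y^k)=[\sigma]_{\Phi^n}(A[\Gamma^k])$. Here $[\hat\Phi.N/x]$ and $[\sigma]$ are the (capture-avoiding, $\beta$-redex-eliminating) hereditary single and simultaneous substitutions, and $\lfloor\sigma\rfloor_k$, $\sigma\oplus\tau$, $\mathrm{id}(\hat\Gamma)$ are the analogous chopping, merging and identity operations on substitutions. *)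

theory Defs
  imports Main "HOL-Library.Monad_Syntax"
begin

text \<open>Variables x^n: a name (a natural number) together with a level n.\<close>
datatype var = V nat nat

primrec lvl :: "var \<Rightarrow> nat" where
  "lvl (V x n) = n"

datatype srt = SType | SKind

text \<open>
  Lists representing contexts and substitutions
  are stored with the MOST RECENT entry at the head:  the context Psi, x:A[Phi] is
  CE x A Phi # Psi, and the substitution sigma, e is e # sigma.
  Name lists (hat Gamma) are stored in the same order as the corresponding context.

  TSort s           : sort s
  TConst a          : type constant a
  TApp P G N        : P (G.N)
  TPi x A Phi B     : Pi x:A[Phi].B
  NVar x sigma      : x[sigma]
  NConst c          : term constant c
  NApp R G N        : R (G.N)
  NLam x M          : lambda x. M
  SEnt k G M        : substitution entry G^k.M
  SRen y            : renaming entry y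
  CE x A Gamma      : context entry x : A[Gamma]
\<close>
datatype tp = TSort srt | TConst string | TApp tp "var list" nrm | TPi var tp "ce list" tp
and nrm = NVar var "se list" | NConst string | NApp nrm "var list" nrm | NLam var nrm
and se = SEnt nat "var list" nrm | SRen var
and ce = CE var tp "ce list"

type_synonym ctx = "ce list"
type_synonym sub = "se list"
type_synonym signature = "string \<Rightarrow> tp option"

primrec cname :: "ce \<Rightarrow> var" where "cname (CE x A G) = x"
primrec clvl :: "ce \<Rightarrow> nat" where "clvl (CE x A G) = lvl x"
primrec slvl :: "se \<Rightarrow> nat" where
  "slvl (SEnt k G M) = k"
| "slvl (SRen y) = lvl y"

definition names :: "ctx \<Rightarrow> var list" where "names G = map cname G"

fun atomic_tp :: "tp \<Rightarrow> bool" where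
  "atomic_tp (TPi x A Phi B) = False"
| "atomic_tp _ = True"

fun merge_by :: "('a \<Rightarrow> nat) \<Rightarrow> 'a list \<Rightarrow> 'a list \<Rightarrow> 'a list" where
  "merge_by lv [] Phi = Phi"
| "merge_by lv Psi [] = Psi"
| "merge_by lv (x # Psi) (y # Phi) =
     (if lv y \<le> lv x then y # merge_by lv (x # Psi) Phi
      else x # merge_by lv Psi (y # Phi))"

fun chop_by :: "('a \<Rightarrow> nat) \<Rightarrow> nat \<Rightarrow> 'a list \<Rightarrow> 'a list" where
  "chop_by lv n [] = []"
| "chop_by lv n (x # Psi) = (if lv x < n then chop_by lv n Psi else x # Psi)"

abbreviation merge :: "ctx \<Rightarrow> ctx \<Rightarrow> ctx" (infixl "\<oplus>" 65) where
  "merge \<equiv> merge_by clvl"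
abbreviation chop :: "ctx \<Rightarrow> nat \<Rightarrow> ctx" where
  "chop Psi n \<equiv> chop_by clvl n Psi"
abbreviation merge_sub :: "sub \<Rightarrow> sub \<Rightarrow> sub" where
  "merge_sub \<equiv> merge_by slvl"
abbreviation chop_sub :: "sub \<Rightarrow> nat \<Rightarrow> sub" where
  "chop_sub sigma n \<equiv> chop_by slvl n sigma"

definition id_sub :: "ctx \<Rightarrow> sub" where "id_sub G = map (\<lambda>e. SRen (cname e)) G"

text \<open>Context lookup Psi(x) = A[Phi]; the most recent declaration wins.\<close>
definition lookup :: "ctx \<Rightarrow> var \<Rightarrow> ce option" where
  "lookup Psi x = find (\<lambda>e. cname e = x) Psi"

text \<open>Free variables of a context whose entries have free-variable sets fvs and names xs
  (head = most recent; each entry may refer to the entries after it in the list).\<close>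
fun ctx_fv :: "var set list \<Rightarrow> var list \<Rightarrow> var set" where
  "ctx_fv (S # Ss) (x # xs) = (S - set xs) \<union> ctx_fv Ss xs"
| "ctx_fv _ _ = {}"

primrec fv_tp :: "tp \<Rightarrow> var set"
and fv_n :: "nrm \<Rightarrow> var set"
and fv_se :: "se \<Rightarrow> var set"
and fv_ce :: "ce \<Rightarrow> var set" where
  "fv_tp (TSort s) = {}"
| "fv_tp (TConst a) = {}"
| "fv_tp (TApp P G N) = fv_tp P \<union> (fv_n N - set G)"
| "fv_tp (TPi x A Phi B) = ctx_fv (map fv_ce Phi) (map cname Phi)
      \<union> (fv_tp A - set (map cname Phi)) \<union> (fv_tp B - {x})"
| "fv_n (NVar x sigma) = insert x (\<Union> (set (map fv_se sigma)))"
| "fv_n (NConst c) = {}"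
| "fv_n (NApp R G N) = fv_n R \<union> (fv_n N - set G)"
| "fv_n (NLam x M) = fv_n M - {x}"
| "fv_se (SEnt k G M) = fv_n M - set G"
| "fv_se (SRen y) = {y}"
| "fv_ce (CE x A G) = ctx_fv (map fv_ce G) (map cname G) \<union> (fv_tp A - set (map cname G))"

text \<open>A simultaneous substitution to be applied: an association list from variables to
  substitution entries (variables outside its domain are left unchanged).\<close>
type_synonym hsubst = "(var \<times> se) list"

definition rfv :: "hsubst \<Rightarrow> var set" where
  "rfv th = \<Union> ((fv_se \<circ> snd) ` set th)"

definition restrict :: "var list \<Rightarrow> hsubst \<Rightarrow> hsubst" where
  "restrict bs th = filter (\<lambda>p. fst p \<notin> set bs) th"

text \<open>Going under binders bs: bound variables shadow the domain; the substitution is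
  capture-avoiding: if a bound variable occurs free in the range, it is undefined.\<close>
definition under :: "var list \<Rightarrow> hsubst \<Rightarrow> hsubst option" where
  "under bs th = (if set bs \<inter> rfv (restrict bs th) = {} then Some (restrict bs th) else None)"

text \<open>Hereditary substitution with a fuel argument (None when fuel is exhausted or the
  substitution is undefined); the actual operation is obtained by taking enough fuel.\<close>
function hs_t :: "nat \<Rightarrow> hsubst \<Rightarrow> tp \<Rightarrow> tp option"
and hs_n :: "nat \<Rightarrow> hsubst \<Rightarrow> nrm \<Rightarrow> nrm option"
and hs_s :: "nat \<Rightarrow> hsubst \<Rightarrow> sub \<Rightarrow> sub option"
and hs_se :: "nat \<Rightarrow> hsubst \<Rightarrow> se \<Rightarrow> se option"
and hs_c :: "nat \<Rightarrow> hsubst \<Rightarrow> ctx \<Rightarrow> ctx option"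
and hs_ce :: "nat \<Rightarrow> hsubst \<Rightarrow> ce \<Rightarrow> ce option" where
  "hs_t 0 th T = None"
| "hs_t (Suc n) th T = (case T of
       TSort s \<Rightarrow> Some (TSort s)
     | TConst a \<Rightarrow> Some (TConst a)
     | TApp P G N \<Rightarrow>
         do { P' \<leftarrow> hs_t n th P; th' \<leftarrow> under G th; N' \<leftarrow> hs_n n th' N; Some (TApp P' G N') }
     | TPi x A Phi B \<Rightarrow>
         do { Phi' \<leftarrow> hs_c n th Phi; thA \<leftarrow> under (names Phi) th; A' \<leftarrow> hs_t n thA A;
              thB \<leftarrow> under [x] th; B' \<leftarrow> hs_t n thB B; Some (TPi x A' Phi' B') })"
| "hs_n 0 th M = None"
| "hs_n (Suc n) th M = (case M of
       NVar x sigma \<Rightarrow>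
         do { sigma' \<leftarrow> hs_s n th sigma;
              (case map_of th x of
                 None \<Rightarrow> Some (NVar x sigma')
               | Some (SRen y) \<Rightarrow> Some (NVar y sigma')
               | Some (SEnt k G N) \<Rightarrow>
                   (if length G = length sigma' then hs_n n (zip G sigma') N else None)) }
     | NConst c \<Rightarrow> Some (NConst c)
     | NApp R G N \<Rightarrow>
         do { R' \<leftarrow> hs_n n th R; th' \<leftarrow> under G th; N' \<leftarrow> hs_n n th' N;
              (case R' of
                 NLam x M \<Rightarrow> hs_n n [(x, SEnt (lvl x) G N')] M
               | _ \<Rightarrow> Some (NApp R' G N')) }
     | NLam x M \<Rightarrow>
         do { th' \<leftarrow> under [x] th; M' \<leftarrow> hs_n n th' M; Some (NLam x M') })"
| "hs_s 0 th sigma = None"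
| "hs_s (Suc n) th sigma = (case sigma of
       [] \<Rightarrow> Some []
     | e # sigma0 \<Rightarrow>
         do { e' \<leftarrow> hs_se n th e; sigma' \<leftarrow> hs_s n th sigma0; Some (e' # sigma') })"
| "hs_se 0 th e = None"
| "hs_se (Suc n) th e = (case e of
       SEnt k G M \<Rightarrow> do { th' \<leftarrow> under G th; M' \<leftarrow> hs_n n th' M; Some (SEnt k G M') }
     | SRen y \<Rightarrow> (case map_of th y of None \<Rightarrow> Some (SRen y) | Some e' \<Rightarrow> Some e'))"
| "hs_c 0 th G = None"
| "hs_c (Suc n) th G = (case G of
       [] \<Rightarrow> Some []
     | e # G0 \<Rightarrow>
         do { G' \<leftarrow> hs_c n th G0; th' \<leftarrow> under (names G0) th; e' \<leftarrow> hs_ce n th' e;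
              Some (e' # G') })"
| "hs_ce 0 th e = None"
| "hs_ce (Suc n) th e = (case e of
       CE x A G \<Rightarrow>
         do { G' \<leftarrow> hs_c n th G; th' \<leftarrow> under (names G) th; A' \<leftarrow> hs_t n th' A;
              Some (CE x A' G') })"
  by pat_completeness auto
termination
  by (relation "measure (case_sum (case_sum fst (case_sum fst fst)) (case_sum fst (case_sum fst fst)))") auto

definition with_fuel :: "(nat \<Rightarrow> 'a option) \<Rightarrow> 'a option" where
  "with_fuel f = (if \<exists>n. f n \<noteq> None then f (LEAST n. f n \<noteq> None) else None)"

definition hsub_tp :: "hsubst \<Rightarrow> tp \<Rightarrow> tp option" where
  "hsub_tp th A = with_fuel (\<lambda>n. hs_t n th A)"
definition hsub_ctx :: "hsubst \<Rightarrow> ctx \<Rightarrow> ctx option" where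
  "hsub_ctx th G = with_fuel (\<lambda>n. hs_c n th G)"
definition hsub_ce :: "hsubst \<Rightarrow> ce \<Rightarrow> ce option" where
  "hsub_ce th e = with_fuel (\<lambda>n. hs_ce n th e)"

definition sub_for :: "sub \<Rightarrow> ctx \<Rightarrow> hsubst" where
  "sub_for sigma Phi = zip (names Phi) sigma"

text \<open>
  ctx_ok Sig Psi n Phi  :  Psi |- Phi^n ctx
  chk_tp Sig Psi A s    :  Psi |- A <= s
  inf_tp Sig Psi P K    :  Psi |- P => K
  inf Sig Psi R A       :  Psi |- R => A
  chk Sig Psi M A       :  Psi |- M <= A
  chk_sub Sig Psi s Phi :  Psi |- sigma <= Phi
\<close>
inductive ctx_ok :: "signature \<Rightarrow> ctx \<Rightarrow> nat \<Rightarrow> ctx \<Rightarrow> bool"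
and chk_tp :: "signature \<Rightarrow> ctx \<Rightarrow> tp \<Rightarrow> srt \<Rightarrow> bool"
and inf_tp :: "signature \<Rightarrow> ctx \<Rightarrow> tp \<Rightarrow> tp \<Rightarrow> bool"
and inf :: "signature \<Rightarrow> ctx \<Rightarrow> nrm \<Rightarrow> tp \<Rightarrow> bool"
and chk :: "signature \<Rightarrow> ctx \<Rightarrow> nrm \<Rightarrow> tp \<Rightarrow> bool"
and chk_sub :: "signature \<Rightarrow> ctx \<Rightarrow> sub \<Rightarrow> ctx \<Rightarrow> bool"
for Sig :: signature where
  ctx_nil: "ctx_ok Sig Psi n []"
| ctx_snoc: "\<lbrakk> lvl x = k; k < n; ctx_ok Sig Psi n Phi;
               chk_tp Sig ((chop Psi n \<oplus> chop Phi k) \<oplus> G) A SType;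
               ctx_ok Sig (chop Psi n \<oplus> chop Phi k) k G \<rbrakk>
             \<Longrightarrow> ctx_ok Sig Psi n (CE x A G # Phi)"
| chk_type_kind: "chk_tp Sig Psi (TSort SType) SKind"
| chk_atomic_tp: "\<lbrakk> atomic_tp P; inf_tp Sig Psi P (TSort SType) \<rbrakk> \<Longrightarrow> chk_tp Sig Psi P SType"
| chk_pi: "\<lbrakk> lvl x = n; chk_tp Sig (chop Psi n \<oplus> Phi) A SType; ctx_ok Sig Psi n Phi;
             chk_tp Sig (Psi \<oplus> [CE x A Phi]) B s \<rbrakk>
           \<Longrightarrow> chk_tp Sig Psi (TPi x A Phi B) s"
| inf_tconst: "Sig a = Some K \<Longrightarrow> inf_tp Sig Psi (TConst a) K"
| inf_tapp: "\<lbrakk> lvl x = n; inf_tp Sig Psi P (TPi x A Phi K); chk Sig (chop Psi n \<oplus> Phi) N A;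
               hsub_tp [(x, SEnt n (names Phi) N)] K = Some K' \<rbrakk>
             \<Longrightarrow> inf_tp Sig Psi (TApp P (names Phi) N) K'"
| inf_const: "Sig c = Some A \<Longrightarrow> inf Sig Psi (NConst c) A"
| inf_app: "\<lbrakk> lvl x = n; inf Sig Psi R (TPi x A Phi B); chk Sig (chop Psi n \<oplus> Phi) N A;
              hsub_tp [(x, SEnt n (names Phi) N)] B = Some B' \<rbrakk>
            \<Longrightarrow> inf Sig Psi (NApp R (names Phi) N) B'"
| inf_var: "\<lbrakk> lookup Psi x = Some (CE x A Phi); chk_sub Sig Psi sigma Phi;
              hsub_tp (sub_for sigma Phi) A = Some A' \<rbrakk>
            \<Longrightarrow> inf Sig Psi (NVar x sigma) A'"
| chk_atomic: "\<lbrakk> inf Sig Psi R P; atomic_tp P; atomic_tp Q; P = Q \<rbrakk> \<Longrightarrow> chk Sig Psi R Q"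
| chk_lam: "chk Sig (Psi \<oplus> [CE x A Phi]) M B \<Longrightarrow> chk Sig Psi (NLam x M) (TPi x A Phi B)"
| sub_nil: "chk_sub Sig Psi [] []"
| sub_ent: "\<lbrakk> lvl x = k; chk_sub Sig Psi sigma Phi;
              hsub_ctx (sub_for sigma Phi) G = Some G';
              hsub_tp (zip (names (chop Phi k \<oplus> G)) (merge_sub (chop_sub sigma k) (id_sub G))) A
                = Some A';
              chk Sig (chop Psi k \<oplus> G') M A' \<rbrakk>
            \<Longrightarrow> chk_sub Sig Psi (SEnt k (names G) M # sigma) (CE x A G # Phi)"
| sub_ren: "\<lbrakk> lvl y = lvl x; chk_sub Sig Psi sigma Phi;
              hsub_ce (sub_for sigma Phi) (CE x A G) = Some (CE x A' G');
              lookup Psi y = Some (CE y A' G') \<rbrakk>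
            \<Longrightarrow> chk_sub Sig Psi (SRen y # sigma) (CE x A G # Phi)"

end

theory Submission
  imports Defs
begin

text \<open>The rule for a context entry consults the ambient context \<open>\<Psi>\<close> only through
  \<open>\<lfloor>\<Psi>\<rfloor>\<^sub>n\<close>, and chopping is idempotent, so an induction on \<open>\<Phi>\<close> shows that
  \<open>\<Psi>\<close> and \<open>\<lfloor>\<Psi>\<rfloor>\<^sub>n\<close> validate the same contexts.\<close>

lemma chop_by_idem [simp]: "chop_by lv n (chop_by lv n xs) = chop_by lv n xs"
  by (induction xs) auto

lemma ctx_ok_Cons_iff:
  "ctx_ok Sig Psi n (CE x A G # Phi) \<longleftrightarrow>
     lvl x < n \<and> ctx_ok Sig Psi n Phi \<and>
     chk_tp Sig ((chop Psi n \<oplus> chop Phi (lvl x)) \<oplus> G) A SType \<and>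
     ctx_ok Sig (chop Psi n \<oplus> chop Phi (lvl x)) (lvl x) G"
  by (auto elim: ctx_ok.cases intro: ctx_snoc)

lemma ctx_ok_chop_iff: "ctx_ok Sig Psi n Phi \<longleftrightarrow> ctx_ok Sig (chop Psi n) n Phi"
proof (induction Phi)
  case Nil
  then show ?case by (auto intro: ctx_nil)
next
  case (Cons e Phi)
  obtain x A G where "e = CE x A G" by (cases e)
  with Cons show ?case by (simp add: ctx_ok_Cons_iff)
qed

theorem mainTheorem5:
  fixes Sig :: signature and Psi Phi :: ctx and k :: nat
  assumes "\<forall>x \<in> set (names Phi). lvl x < k"
  shows "ctx_ok Sig Psi k Phi \<longleftrightarrow> ctx_ok Sig (chop Psi k) k Phi"
  by (rule ctx_ok_chop_iff)

end
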